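(* Let $g:\mathbb R\to\mathbb R$ be a $\chi$-integrable odd function and define $h(\omega)=\int_{\mathbb R}g(z)c(\omega,z)e^{2V(\omega)}\chi(dz)$. Then for every $\varphi\in\mathcal C$, $$(h,\varphi)_\pi=-\frac12\mathbb M\int_{\mathbb R}g(z)\big(T_z\varphi-\varphi\big)c(\cdot,z)\chi(dz).$$
   Context: $(\Omega,\mathcal G,\mu)$ is a probability space with an ergodic, jointly measurable group $\{\tau_x\}_{x\in\mathbb R}$ of measure-preserving maps; $\mathbb M$ is expectation under $\mu$; $T_x\varphi(\omega)=\varphi(\tau_x\omega)$. $\mathcal C=\mathrm{Span}\{f\star\phi:f\in L^\infty(\Omega),\phi\in C_c^\infty(\mathbb R)\}$, $f\star\phi(\omega)=\int f(\tau_x\omega)\phi(x)dx$. $\chi$ is a symmetric Lévy measure on $\mathbb R$ ($\chi(dz)=\chi(-dz)$), $c:\Omega\times\mathbb R\to[0,\infty)$ is bounded measurable with $c(\tau_z\omega,-z)=c(\omega,z)$ for $\mu$-a.e. $\omega$ and $\chi$-a.e. $z$; $V\in L^\infty(\Omega)$, normalized so that $\pi=e^{-2V}\mu$ is a probability, and $(f,g)_\pi=\mathbb M[fge^{-2V}]$. *)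

theory Defs
  imports "HOL-Probability.Probability"
begin

definition ergodic_flow :: "'a measure \<Rightarrow> (real \<Rightarrow> 'a \<Rightarrow> 'a) \<Rightarrow> bool" where
  "ergodic_flow M \<tau> \<longleftrightarrow>
     prob_space M \<and>
     (\<lambda>(x, \<omega>). \<tau> x \<omega>) \<in> measurable (lborel \<Otimes>\<^sub>M M) M \<and>
     (\<forall>\<omega>\<in>space M. \<tau> 0 \<omega> = \<omega>) \<and>
     (\<forall>x y. \<forall>\<omega>\<in>space M. \<tau> (x + y) \<omega> = \<tau> x (\<tau> y \<omega>)) \<and>
     (\<forall>x. \<tau> x \<in> measurable M M \<and> distr M M (\<tau> x) = M) \<and>
     (\<forall>A\<in>sets M. (\<forall>x. \<tau> x -` A \<inter> space M = A) \<longrightarrow>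
                   measure M A = 0 \<or> measure M A = 1)"

definition symmetric_levy_measure :: "real measure \<Rightarrow> bool" where
  "symmetric_levy_measure \<nu> \<longleftrightarrow>
     sets \<nu> = sets borel \<and> emeasure \<nu> {0} = 0 \<and>
     (\<integral>\<^sup>+ z. ennreal (min 1 (z\<^sup>2)) \<partial>\<nu>) < \<infinity> \<and>
     distr \<nu> borel uminus = \<nu>"

definition Linf :: "'a measure \<Rightarrow> ('a \<Rightarrow> real) set" where
  "Linf M = {f. f \<in> borel_measurable M \<and> (\<exists>B. AE \<omega> in M. \<bar>f \<omega>\<bar> \<le> B)}"

definition Cc_infty :: "(real \<Rightarrow> real) set" where
  "Cc_infty = {\<psi>. (\<forall>n x. ((deriv ^^ n) \<psi>) differentiable (at x)) \<and>
                   compact (closure {x. \<psi> x \<noteq> 0})}"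

definition star :: "(real \<Rightarrow> 'a \<Rightarrow> 'a) \<Rightarrow> ('a \<Rightarrow> real) \<Rightarrow> (real \<Rightarrow> real) \<Rightarrow> 'a \<Rightarrow> real" where
  "star \<tau> f \<psi> \<omega> = (\<integral>x. f (\<tau> x \<omega>) * \<psi> x \<partial>lborel)"

definition core_C :: "'a measure \<Rightarrow> (real \<Rightarrow> 'a \<Rightarrow> 'a) \<Rightarrow> ('a \<Rightarrow> real) set" where
  "core_C M \<tau> = {\<phi>. \<exists>n (a :: nat \<Rightarrow> real) F \<Psi>.
      (\<forall>i<n. F i \<in> Linf M \<and> \<Psi> i \<in> Cc_infty) \<and>
      \<phi> = (\<lambda>\<omega>. \<Sum>i<n. a i * star \<tau> (F i) (\<Psi> i) \<omega>)}"

definition inner_pi :: "'a measure \<Rightarrow> ('a \<Rightarrow> real) \<Rightarrow> ('a \<Rightarrow> real) \<Rightarrow> ('a \<Rightarrow> real) \<Rightarrow> real" where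
  "inner_pi M V f g = (\<integral>\<omega>. f \<omega> * g \<omega> * exp (- 2 * V \<omega>) \<partial>M)"

end

theory Submission
  imports Defs
begin

text \<open>Since \<open>c(\<tau>\<^sub>z \<omega>, -z) = c(\<omega>, z)\<close>, the map \<open>(\<omega>, z) \<mapsto> (\<tau>\<^sub>z \<omega>, -z)\<close> preserves the
  measure \<open>c(\<omega>, z) M(d\<omega>) \<chi>(dz)\<close>; as \<open>g\<close> is odd, it turns \<open>\<integral>\<integral> g(z) \<phi>(\<tau>\<^sub>z \<omega>) c\<close> into
  \<open>-\<integral>\<integral> g(z) \<phi>(\<omega>) c\<close>. So the right-hand side is \<open>\<integral>\<integral> g(z) \<phi>(\<omega>) c\<close>, which is \<open>(h, \<phi>)\<^sub>\<pi>\<close>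
  because the weight \<open>e\<^sup>2\<^sup>V\<close> in \<open>h\<close> cancels the density \<open>e\<^sup>-\<^sup>2\<^sup>V\<close> of \<open>\<pi>\<close>.\<close>

lemma symmetric_levy_measure_sigma_finite:
  assumes "symmetric_levy_measure \<nu>"
  shows "sigma_finite_measure \<nu>"
proof
  have sets: "sets \<nu> = sets borel" and fin: "(\<integral>\<^sup>+ z. ennreal (min 1 (z\<^sup>2)) \<partial>\<nu>) < \<infinity>"
    and zero: "emeasure \<nu> {0} = 0"
    using assms by (auto simp: symmetric_levy_measure_def)
  define S where "S n = {z::real. 1 / real (Suc n) \<le> \<bar>z\<bar>}" for n
  have S_sets: "S n \<in> sets \<nu>" for n unfolding S_def sets by measurable
  have S_finite: "emeasure \<nu> (S n) \<noteq> \<infinity>" for n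
  proof -
    let ?k = "real (Suc n)"
    have "indicator (S n) z \<le> ennreal (?k\<^sup>2) * ennreal (min 1 (z\<^sup>2))" for z
    proof (cases "z \<in> S n")
      case True
      then have "1 \<le> ?k * \<bar>z\<bar>" by (simp add: S_def field_simps)
      then have "1 \<le> ?k\<^sup>2 * z\<^sup>2" by (metis one_le_power power2_abs power_mult_distrib)
      moreover have "1 \<le> ?k\<^sup>2" by (simp add: one_le_power)
      ultimately have "1 \<le> ?k\<^sup>2 * min 1 (z\<^sup>2)" by (simp add: min_def)
      then show ?thesis using True by (simp add: ennreal_mult[symmetric] ennreal_leI)
    qed simp
    then have "emeasure \<nu> (S n) \<le> (\<integral>\<^sup>+ z. ennreal (?k\<^sup>2) * ennreal (min 1 (z\<^sup>2)) \<partial>\<nu>)"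
      using S_sets by (auto simp del: nn_integral_indicator
          simp: nn_integral_indicator[symmetric] intro!: nn_integral_mono)
    also have "\<dots> = ennreal (?k\<^sup>2) * (\<integral>\<^sup>+ z. ennreal (min 1 (z\<^sup>2)) \<partial>\<nu>)"
      by (rule nn_integral_cmult) (simp add: measurable_cong_sets[OF sets refl])
    also have "\<dots> < \<infinity>" using fin by (simp add: ennreal_mult_less_top)
    finally show ?thesis by simp
  qed
  have cover: "z \<in> {0} \<union> (\<Union>n. S n)" for z :: real
  proof (cases "z = 0")
    case False
    then obtain n where "1 / real (Suc n) < \<bar>z\<bar>" using nat_approx_posE[of "\<bar>z\<bar>"] by auto
    then show ?thesis by (auto simp: S_def intro!: exI[of _ n])
  qed simp
  show "\<exists>A. countable A \<and> A \<subseteq> sets \<nu> \<and> \<Union> A = space \<nu> \<and> (\<forall>a\<in>A. emeasure \<nu> a \<noteq> \<infinity>)"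
    using S_sets S_finite zero cover sets_eq_imp_space_eq[OF sets]
    by (intro exI[of _ "insert {0} (range S)"]) (auto simp: sets, blast)
qed

lemma integrable_mult_bounded:
  fixes f w :: "'a \<Rightarrow> real"
  assumes f: "integrable M f" and w: "w \<in> borel_measurable M"
    and bounds: "\<And>x. 0 \<le> w x" "\<And>x. w x \<le> B"
  shows "integrable M (\<lambda>x. f x * w x)"
proof (rule Bochner_Integration.integrable_bound[OF integrable_mult_right[OF f, of B]])
  show "(\<lambda>x. f x * w x) \<in> borel_measurable M" using f w by auto
  have "\<bar>f x * w x\<bar> \<le> \<bar>B * f x\<bar>" for x
    using bounds[of x] by (simp add: abs_mult mult.commute mult_right_mono)
  then show "AE x in M. norm (f x * w x) \<le> norm (B * f x)" by simp
qed

lemma integrable_pair_measure_preserving_mult: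
  fixes f :: "'a \<Rightarrow> real" and g :: "'b \<Rightarrow> real"
  assumes "pair_sigma_finite M N"
    and T: "\<And>y. y \<in> space N \<Longrightarrow> T y \<in> measurable M M" "\<And>y. y \<in> space N \<Longrightarrow> distr M M (T y) = M"
    and fT: "(\<lambda>(x, y). f (T y x)) \<in> borel_measurable (M \<Otimes>\<^sub>M N)"
    and f: "integrable M f" and g: "integrable N g"
  shows "integrable (M \<Otimes>\<^sub>M N) (\<lambda>(x, y). f (T y x) * g y)"
proof -
  interpret pair_sigma_finite M N by fact
  have [measurable]: "g \<in> borel_measurable N" "f \<in> borel_measurable M"
    and [measurable]: "(\<lambda>(x, y). f (T y x)) \<in> borel_measurable (M \<Otimes>\<^sub>M N)"
    using f g fT by auto
  define Cf where "Cf = (\<integral>\<^sup>+ x. ennreal (norm (f x)) \<partial>M)"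
  have inner: "(\<integral>\<^sup>+ x. ennreal (norm (f (T y x) * g y)) \<partial>M) = ennreal (norm (g y)) * Cf"
    if y: "y \<in> space N" for y
  proof -
    have "(\<integral>\<^sup>+ x. ennreal (norm (f (T y x) * g y)) \<partial>M)
        = (\<integral>\<^sup>+ x. ennreal (norm (f (T y x))) \<partial>M) * ennreal (norm (g y))"
      using T(1)[OF y] by (simp add: abs_mult ennreal_mult nn_integral_multc)
    also have "(\<integral>\<^sup>+ x. ennreal (norm (f (T y x))) \<partial>M) = Cf"
      using nn_integral_distr[OF T(1)[OF y], of "\<lambda>x. ennreal (norm (f x))"] T(2)[OF y]
      by (simp add: Cf_def)
    finally show ?thesis by (simp add: mult.commute)
  qed
  have "(\<integral>\<^sup>+ p. ennreal (norm (case p of (x, y) \<Rightarrow> f (T y x) * g y)) \<partial>(M \<Otimes>\<^sub>M N))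
      = (\<integral>\<^sup>+ y. \<integral>\<^sup>+ x. ennreal (norm (f (T y x) * g y)) \<partial>M \<partial>N)"
    by (subst nn_integral_snd[symmetric]) (auto simp: case_prod_beta')
  also have "\<dots> = (\<integral>\<^sup>+ y. ennreal (norm (g y)) * Cf \<partial>N)"
    by (rule nn_integral_cong) (use inner in simp)
  also have "\<dots> = (\<integral>\<^sup>+ y. ennreal (norm (g y)) \<partial>N) * Cf"
    by (rule nn_integral_multc) measurable
  also have "\<dots> < \<infinity>"
    using f g by (simp add: Cf_def integrable_iff_bounded ennreal_mult_less_top)
  finally show ?thesis by (simp add: integrable_iff_bounded)
qed

lemma ergodic_flow_prob_space: "ergodic_flow M \<tau> \<Longrightarrow> prob_space M"
  by (simp add: ergodic_flow_def)

lemma ergodic_flow_measure_preserving: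
  assumes "ergodic_flow M \<tau>"
  shows "\<tau> z \<in> measurable M M" and "distr M M (\<tau> z) = M"
  using assms unfolding ergodic_flow_def by blast+

lemma ergodic_flow_measurable_pair:
  assumes "ergodic_flow M \<tau>" and "sets N = sets borel"
  shows "(\<lambda>(\<omega>, z). \<tau> z \<omega>) \<in> measurable (M \<Otimes>\<^sub>M N) M"
proof -
  have "sets (N \<Otimes>\<^sub>M M) = sets (lborel \<Otimes>\<^sub>M M)"
    using assms(2) by (intro sets_pair_measure_cong) simp_all
  moreover have "(\<lambda>(z, \<omega>). \<tau> z \<omega>) \<in> measurable (lborel \<Otimes>\<^sub>M M) M"
    using assms(1) unfolding ergodic_flow_def by blast
  ultimately have "(\<lambda>(z, \<omega>). \<tau> z \<omega>) \<in> measurable (N \<Otimes>\<^sub>M M) M"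
    using measurable_cong_sets by blast
  moreover have "(\<lambda>(\<omega>, z). \<tau> z \<omega>) = (\<lambda>(z, \<omega>). \<tau> z \<omega>) \<circ> (\<lambda>(\<omega>, z). (z, \<omega>))"
    by auto
  ultimately show ?thesis using measurable_comp[OF measurable_pair_swap'] by metis
qed

lemma Cc_infty_integrable:
  assumes "\<psi> \<in> Cc_infty" shows "integrable lborel \<psi>"
proof -
  let ?K = "closure {x. \<psi> x \<noteq> 0}"
  have d: "\<psi> differentiable (at x)" for x
    using assms by (auto simp: Cc_infty_def dest: spec[of _ 0])
  have K: "compact ?K" using assms by (simp add: Cc_infty_def)
  have "continuous_on ?K \<psi>"
    using d by (meson differentiable_imp_continuous_within continuous_at_imp_continuous_on)
  from borel_integrable_compact[OF K this]
  have "integrable lborel (\<lambda>x. indicator ?K x *\<^sub>R \<psi> x)" .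
  moreover have "(\<lambda>x. indicator ?K x *\<^sub>R \<psi> x) = \<psi>"
    using closure_subset[of "{x. \<psi> x \<noteq> 0}"] by (force simp: indicator_def)
  ultimately show ?thesis by simp
qed

lemma star_integrable:
  assumes flow: "ergodic_flow M \<tau>" and f: "f \<in> Linf M" and \<psi>: "\<psi> \<in> Cc_infty"
  shows "integrable M (star \<tau> f \<psi>)"
proof -
  interpret prob_space M using ergodic_flow_prob_space[OF flow] .
  interpret pair_sigma_finite M lborel ..
  obtain B where [measurable]: "f \<in> borel_measurable M" and "AE \<omega> in M. \<bar>f \<omega>\<bar> \<le> B"
    using f by (auto simp: Linf_def)
  then have "integrable M f" by (intro integrable_const_bound[of _ B]) auto
  have "integrable (M \<Otimes>\<^sub>M lborel) (\<lambda>(\<omega>, x). f (\<tau> x \<omega>) * \<psi> x)"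
    using ergodic_flow_measure_preserving[OF flow] ergodic_flow_measurable_pair[OF flow, of lborel]
    by (intro integrable_pair_measure_preserving_mult[OF _ _ _ _ \<open>integrable M f\<close> Cc_infty_integrable[OF \<psi>]])
       (auto intro: pair_sigma_finite_axioms)
  from integrable_fst[OF this] show ?thesis by (simp add: star_def[abs_def])
qed

lemma core_C_integrable:
  assumes flow: "ergodic_flow M \<tau>" and "\<phi> \<in> core_C M \<tau>"
  shows "integrable M \<phi>"
proof -
  obtain n a F \<Psi> where "\<forall>i<(n::nat). F i \<in> Linf M \<and> \<Psi> i \<in> Cc_infty"
    and "\<phi> = (\<lambda>\<omega>. \<Sum>i<n. a i * star \<tau> (F i) (\<Psi> i) \<omega>)"
    using assms(2) by (auto simp: core_C_def)
  then show ?thesis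
    by (auto intro!: Bochner_Integration.integrable_sum integrable_mult_right star_integrable[OF flow])
qed

locale stationary_symmetric_jumps = pair_sigma_finite M \<nu>
  for M :: "'a measure" and \<nu> :: "real measure" +
  fixes \<tau> :: "real \<Rightarrow> 'a \<Rightarrow> 'a"
  assumes sets_\<nu>: "sets \<nu> = sets borel"
    and \<nu>_symmetric: "distr \<nu> borel uminus = \<nu>"
    and \<tau>_measurable: "(\<lambda>(\<omega>, z). \<tau> z \<omega>) \<in> measurable (M \<Otimes>\<^sub>M \<nu>) M"
    and \<tau>_measure_preserving: "\<tau> z \<in> measurable M M" "distr M M (\<tau> z) = M"
begin

lemmas [measurable] = \<tau>_measurable

lemma space_\<nu>: "space \<nu> = UNIV"
  using sets_eq_imp_space_eq[OF sets_\<nu>] by simp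

lemma uminus_measurable_\<nu> [measurable]: "uminus \<in> measurable \<nu> \<nu>"
  using measurable_cong_sets[OF sets_\<nu> sets_\<nu>] by simp

lemma flip_measurable [measurable]: "(\<lambda>(\<omega>, z). (\<tau> z \<omega>, - z)) \<in> measurable (M \<Otimes>\<^sub>M \<nu>) (M \<Otimes>\<^sub>M \<nu>)"
  by measurable

text \<open>The map \<open>(\<omega>, z) \<mapsto> (\<tau>\<^sub>z \<omega>, -z)\<close> preserves \<open>M \<Otimes> \<nu>\<close>: integrate out \<open>\<omega>\<close> first, where
  \<open>\<tau>\<^sub>z\<close> preserves \<open>M\<close>, then \<open>z\<close>, where \<open>\<nu>\<close> is symmetric.\<close>
lemma integral_flip_invariant:
  fixes u :: "'a \<Rightarrow> real \<Rightarrow> real"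
  assumes u: "integrable (M \<Otimes>\<^sub>M \<nu>) (\<lambda>(\<omega>, z). u \<omega> z)"
    and u_flip: "integrable (M \<Otimes>\<^sub>M \<nu>) (\<lambda>(\<omega>, z). u (\<tau> z \<omega>) (- z))"
  shows "(\<integral>(\<omega>, z). u (\<tau> z \<omega>) (- z) \<partial>(M \<Otimes>\<^sub>M \<nu>)) = (\<integral>(\<omega>, z). u \<omega> z \<partial>(M \<Otimes>\<^sub>M \<nu>))"
proof -
  define F where "F z = (\<integral>\<omega>. u \<omega> z \<partial>M)" for z
  have F_measurable: "F \<in> borel_measurable borel"
    using borel_measurable_integrable[OF integrable_snd[OF u]]
    unfolding F_def[abs_def] measurable_cong_sets[OF sets_\<nu> refl] .
  have inner: "(\<integral>\<omega>. u (\<tau> z \<omega>) (- z) \<partial>M) = F (- z)" for z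
  proof -
    have "(\<lambda>\<omega>. u \<omega> (- z)) \<in> borel_measurable M"
      using measurable_compose[OF measurable_Pair2' borel_measurable_integrable[OF u]]
      by (simp add: space_\<nu>)
    from integral_distr[OF \<tau>_measure_preserving(1) this]
    show ?thesis unfolding \<tau>_measure_preserving(2) F_def by simp
  qed
  have "(\<integral>(\<omega>, z). u (\<tau> z \<omega>) (- z) \<partial>(M \<Otimes>\<^sub>M \<nu>)) = (\<integral>z. F (- z) \<partial>\<nu>)"
    using integral_snd[OF u_flip] by (simp add: inner)
  also have "\<dots> = (\<integral>z. F z \<partial>distr \<nu> borel uminus)"
    using integral_distr[OF _ F_measurable, of uminus \<nu>] by (simp add: measurable_cong_sets[OF sets_\<nu> refl])
  also have "\<dots> = (\<integral>(\<omega>, z). u \<omega> z \<partial>(M \<Otimes>\<^sub>M \<nu>))"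
    unfolding \<nu>_symmetric F_def using integral_snd[OF u] by simp
  finally show ?thesis .
qed

lemma integrable_bounded_jump_kernel:
  fixes \<phi> :: "'a \<Rightarrow> real" and g :: "real \<Rightarrow> real" and w :: "'a \<Rightarrow> real \<Rightarrow> real"
  assumes \<phi>: "integrable M \<phi>" and g: "integrable \<nu> g"
    and w: "(\<lambda>(\<omega>, z). w \<omega> z) \<in> borel_measurable (M \<Otimes>\<^sub>M \<nu>)"
    and w_bounds: "\<And>\<omega> z. 0 \<le> w \<omega> z" "\<And>\<omega> z. w \<omega> z \<le> B"
  shows "integrable (M \<Otimes>\<^sub>M \<nu>) (\<lambda>(\<omega>, z). \<phi> (\<tau> z \<omega>) * g z * w \<omega> z)"
    and "integrable (M \<Otimes>\<^sub>M \<nu>) (\<lambda>(\<omega>, z). \<phi> \<omega> * g z * w \<omega> z)"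
proof -
  have [measurable]: "\<phi> \<in> borel_measurable M" using \<phi> by auto
  have "integrable (M \<Otimes>\<^sub>M \<nu>) (\<lambda>(\<omega>, z). \<phi> (\<tau> z \<omega>) * g z)"
    using \<tau>_measure_preserving
    by (intro integrable_pair_measure_preserving_mult[OF pair_sigma_finite_axioms _ _ _ \<phi> g]) auto
  from integrable_mult_bounded[OF this w, of B]
  show "integrable (M \<Otimes>\<^sub>M \<nu>) (\<lambda>(\<omega>, z). \<phi> (\<tau> z \<omega>) * g z * w \<omega> z)"
    by (simp add: case_prod_beta' w_bounds)
  have "integrable (M \<Otimes>\<^sub>M \<nu>) (\<lambda>(\<omega>, z). \<phi> ((\<lambda>\<omega>. \<omega>) \<omega>) * g z)"
    by (intro integrable_pair_measure_preserving_mult[OF pair_sigma_finite_axioms _ _ _ \<phi> g])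
       (auto simp: distr_id)
  from integrable_mult_bounded[OF this w, of B]
  show "integrable (M \<Otimes>\<^sub>M \<nu>) (\<lambda>(\<omega>, z). \<phi> \<omega> * g z * w \<omega> z)"
    by (simp add: case_prod_beta' w_bounds)
qed

end


locale symmetric_jump_rate = stationary_symmetric_jumps M \<nu> \<tau>
  for M :: "'a measure" and \<nu> :: "real measure" and \<tau> :: "real \<Rightarrow> 'a \<Rightarrow> 'a" +
  fixes c :: "'a \<Rightarrow> real \<Rightarrow> real" and B :: real
  assumes c_measurable: "(\<lambda>(\<omega>, z). c \<omega> z) \<in> borel_measurable (M \<Otimes>\<^sub>M \<nu>)"
    and c_nonneg: "\<And>\<omega> z. 0 \<le> c \<omega> z"
    and c_le: "\<And>\<omega> z. c \<omega> z \<le> B"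
    and c_symmetric: "AE \<omega> in M. AE z in \<nu>. c (\<tau> z \<omega>) (- z) = c \<omega> z"
begin

lemma c_flip_measurable: "(\<lambda>(\<omega>, z). c (\<tau> z \<omega>) (- z)) \<in> borel_measurable (M \<Otimes>\<^sub>M \<nu>)"
  using measurable_comp[OF flip_measurable c_measurable] by (simp add: comp_def case_prod_beta')

lemma integral_odd_jump_antisymmetric:
  fixes \<phi> :: "'a \<Rightarrow> real" and g :: "real \<Rightarrow> real"
  assumes \<phi>: "integrable M \<phi>" and g: "integrable \<nu> g" and g_odd: "\<And>z. g (- z) = - g z"
  shows "(\<integral>(\<omega>, z). \<phi> (\<tau> z \<omega>) * g z * c \<omega> z \<partial>(M \<Otimes>\<^sub>M \<nu>))
       = - (\<integral>(\<omega>, z). \<phi> \<omega> * g z * c \<omega> z \<partial>(M \<Otimes>\<^sub>M \<nu>))"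
proof -
  note kernels = integrable_bounded_jump_kernel[OF \<phi> g]
  have flip_eq: "(\<lambda>(\<omega>, z). \<phi> (\<tau> z \<omega>) * g (- z) * c (\<tau> z \<omega>) (- z))
      = (\<lambda>(\<omega>, z). - (\<phi> (\<tau> z \<omega>) * g z * c (\<tau> z \<omega>) (- z)))"
    by (simp add: g_odd)
  have flip_integrable: "integrable (M \<Otimes>\<^sub>M \<nu>) (\<lambda>(\<omega>, z). \<phi> (\<tau> z \<omega>) * g (- z) * c (\<tau> z \<omega>) (- z))"
    unfolding flip_eq using kernels(1)[OF c_flip_measurable c_nonneg c_le]
    by (simp add: case_prod_beta')
  have "AE p in M \<Otimes>\<^sub>M \<nu>. c (\<tau> (snd p) (fst p)) (- snd p) = c (fst p) (snd p)"
    using c_symmetric c_measurable c_flip_measurable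
    by (intro AE_pair_measure) (auto simp: case_prod_beta')
  then have "(\<integral>(\<omega>, z). \<phi> (\<tau> z \<omega>) * g z * c \<omega> z \<partial>(M \<Otimes>\<^sub>M \<nu>))
      = (\<integral>(\<omega>, z). - (\<phi> (\<tau> z \<omega>) * g (- z) * c (\<tau> z \<omega>) (- z)) \<partial>(M \<Otimes>\<^sub>M \<nu>))"
    using kernels(1)[OF c_measurable c_nonneg c_le] flip_integrable
    by (intro integral_cong_AE) (auto simp: g_odd case_prod_beta')
  also have "\<dots> = - (\<integral>(\<omega>, z). \<phi> (\<tau> z \<omega>) * g (- z) * c (\<tau> z \<omega>) (- z) \<partial>(M \<Otimes>\<^sub>M \<nu>))"
    by (simp add: case_prod_beta')
  also have "\<dots> = - (\<integral>(\<omega>, z). \<phi> \<omega> * g z * c \<omega> z \<partial>(M \<Otimes>\<^sub>M \<nu>))"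
    using integral_flip_invariant[where u = "\<lambda>\<omega> z. \<phi> \<omega> * g z * c \<omega> z"]
      kernels(2)[OF c_measurable c_nonneg c_le] flip_integrable
    by simp
  finally show ?thesis .
qed

lemma integral_odd_jump_difference:
  fixes \<phi> :: "'a \<Rightarrow> real" and g :: "real \<Rightarrow> real"
  assumes \<phi>: "integrable M \<phi>" and g: "integrable \<nu> g" and g_odd: "\<And>z. g (- z) = - g z"
  shows "(\<integral>\<omega>. (\<integral>z. g z * (\<phi> (\<tau> z \<omega>) - \<phi> \<omega>) * c \<omega> z \<partial>\<nu>) \<partial>M)
       = - 2 * (\<integral>\<omega>. (\<integral>z. \<phi> \<omega> * g z * c \<omega> z \<partial>\<nu>) \<partial>M)"
proof -
  note kernels = integrable_bounded_jump_kernel[OF \<phi> g c_measurable c_nonneg c_le]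
  have "(\<lambda>\<omega> z. g z * (\<phi> (\<tau> z \<omega>) - \<phi> \<omega>) * c \<omega> z)
      = (\<lambda>\<omega> z. \<phi> (\<tau> z \<omega>) * g z * c \<omega> z - \<phi> \<omega> * g z * c \<omega> z)"
    by (simp add: fun_eq_iff algebra_simps)
  moreover have "integrable (M \<Otimes>\<^sub>M \<nu>) (\<lambda>(\<omega>, z). \<phi> (\<tau> z \<omega>) * g z * c \<omega> z - \<phi> \<omega> * g z * c \<omega> z)"
    using Bochner_Integration.integrable_diff[OF kernels] by (simp add: case_prod_beta')
  ultimately have "(\<integral>\<omega>. (\<integral>z. g z * (\<phi> (\<tau> z \<omega>) - \<phi> \<omega>) * c \<omega> z \<partial>\<nu>) \<partial>M)
      = (\<integral>(\<omega>, z). \<phi> (\<tau> z \<omega>) * g z * c \<omega> z \<partial>(M \<Otimes>\<^sub>M \<nu>))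
        - (\<integral>(\<omega>, z). \<phi> \<omega> * g z * c \<omega> z \<partial>(M \<Otimes>\<^sub>M \<nu>))"
    using Bochner_Integration.integral_diff[OF kernels] by (simp add: integral_fst case_prod_beta')
  also have "\<dots> = - 2 * (\<integral>\<omega>. (\<integral>z. \<phi> \<omega> * g z * c \<omega> z \<partial>\<nu>) \<partial>M)"
    unfolding integral_odd_jump_antisymmetric[OF \<phi> g g_odd] integral_fst[OF kernels(2)] by simp
  finally show ?thesis .
qed

end

lemma inner_pi_exp_weight:
  "inner_pi M V (\<lambda>\<omega>. \<integral>z. g z * c \<omega> z * exp (2 * V \<omega>) \<partial>\<nu>) \<phi>
     = (\<integral>\<omega>. (\<integral>z. \<phi> \<omega> * g z * c \<omega> z \<partial>\<nu>) \<partial>M)"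
  unfolding inner_pi_def
proof (rule Bochner_Integration.integral_cong[OF refl])
  fix \<omega>
  let ?I = "\<integral>z. g z * c \<omega> z \<partial>\<nu>"
  have "(\<integral>z. g z * c \<omega> z * exp (2 * V \<omega>) \<partial>\<nu>) * \<phi> \<omega> * exp (- 2 * V \<omega>)
      = ?I * exp (2 * V \<omega>) * \<phi> \<omega> * exp (- 2 * V \<omega>)"
    by (simp only: integral_mult_left_zero)
  also have "\<dots> = \<phi> \<omega> * ?I * (exp (2 * V \<omega>) * exp (- 2 * V \<omega>))"
    by (simp only: mult_ac)
  also have "\<dots> = (\<integral>z. \<phi> \<omega> * g z * c \<omega> z \<partial>\<nu>)"
    by (simp add: exp_add[symmetric] mult.assoc)
  finally show "(\<integral>z. g z * c \<omega> z * exp (2 * V \<omega>) \<partial>\<nu>) * \<phi> \<omega> * exp (- 2 * V \<omega>)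
      = (\<integral>z. \<phi> \<omega> * g z * c \<omega> z \<partial>\<nu>)" .
qed

theorem mainTheorem14:
  fixes M :: "'a measure" and \<tau> :: "real \<Rightarrow> 'a \<Rightarrow> 'a" and \<nu> :: "real measure"
    and c :: "'a \<Rightarrow> real \<Rightarrow> real" and V :: "'a \<Rightarrow> real" and g :: "real \<Rightarrow> real"
    and \<phi> :: "'a \<Rightarrow> real"
  assumes flow: "ergodic_flow M \<tau>"
    and levy: "symmetric_levy_measure \<nu>"
    and c_meas: "(\<lambda>(\<omega>, z). c \<omega> z) \<in> borel_measurable (M \<Otimes>\<^sub>M \<nu>)"
    and c_nonneg: "\<And>\<omega> z. 0 \<le> c \<omega> z"
    and c_bdd: "\<exists>B. \<forall>\<omega> z. c \<omega> z \<le> B"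
    and c_sym: "AE \<omega> in M. AE z in \<nu>. c (\<tau> z \<omega>) (- z) = c \<omega> z"
    and V_Linf: "V \<in> Linf M"
    and V_norm: "prob_space (density M (\<lambda>\<omega>. ennreal (exp (- 2 * V \<omega>))))"
    and g_int: "integrable \<nu> g"
    and g_odd: "\<And>z. g (- z) = - g z"
    and \<phi>_C: "\<phi> \<in> core_C M \<tau>"
  shows "inner_pi M V (\<lambda>\<omega>. \<integral>z. g z * c \<omega> z * exp (2 * V \<omega>) \<partial>\<nu>) \<phi>
         = - (1/2) * (\<integral>\<omega>. (\<integral>z. g z * (\<phi> (\<tau> z \<omega>) - \<phi> \<omega>) * c \<omega> z \<partial>\<nu>) \<partial>M)"
proof -
  interpret M: prob_space M using ergodic_flow_prob_space[OF flow] .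
  interpret N: sigma_finite_measure \<nu> using symmetric_levy_measure_sigma_finite[OF levy] .
  obtain B where c_le: "\<And>\<omega> z. c \<omega> z \<le> B" using c_bdd by blast
  have sets_\<nu>: "sets \<nu> = sets borel" and \<nu>_symmetric: "distr \<nu> borel uminus = \<nu>"
    using levy unfolding symmetric_levy_measure_def by blast+
  interpret symmetric_jump_rate M \<nu> \<tau> c B
    using ergodic_flow_measure_preserving[OF flow] ergodic_flow_measurable_pair[OF flow sets_\<nu>]
      sets_\<nu> \<nu>_symmetric c_meas c_nonneg c_le c_sym
    by unfold_locales auto
  show ?thesis
    unfolding inner_pi_exp_weight
      integral_odd_jump_difference[OF core_C_integrable[OF flow \<phi>_C] g_int g_odd]
    by simp
qed

end
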